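(* Let $g(x)=\sin(x)^2$. For positive integers $m,n$, let $p=\gcd(m,n)$, $\mu=\pi/n$ and $\tilde{G}(m,n)=\frac{1}{\pi}\int_{-\pi/2}^{\pi/2}\prod_{i=0}^{n-1} g(x+mi\mu)\,dx$. Then $$\tilde{G}(m,n)=\frac{2^{p}\,(2p-1)!!}{4^n\, p!}.$$
   Context: $(2p-1)!!=1\cdot3\cdots(2p-1)$ denotes the double factorial. *)

theory Defs
  imports "HOL-Analysis.Analysis"
begin

text \<open>Odd double factorial: (2p-1)!! = 1 * 3 * ... * (2p-1); empty product for p = 0.\<close>
definition odd_double_fact :: "nat \<Rightarrow> nat" where
  "odd_double_fact p = (\<Prod>k\<in>{1..p}. 2 * k - 1)"

definition g :: "real \<Rightarrow> real" where
  "g x = (sin x)^2"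

definition Gtilde :: "nat \<Rightarrow> nat \<Rightarrow> real" where
  "Gtilde m n = (1 / pi) * integral {-pi/2..pi/2}
      (\<lambda>x. \<Prod>i<n. g (x + real m * real i * (pi / real n)))"

end

theory Submission
  imports Defs "HOL-Computational_Algebra.Fundamental_Theorem_Algebra" "HOL-Number_Theory.Cong"
begin

text \<open>
  Write p = gcd m n, m = p m', n = p n'. Since sin^2 has period pi, the shift m i pi / n only
  matters through m' i mod n', and as i runs over [0, n) this residue runs p times over [0, n')
  because m' and n' are coprime. Taking squared absolute values in the factorisation
  z^N - 1 = prod_(j<N) (z - w^j), w = cis (2 pi / N), gives
  prod_(j<N) sin^2 (x + j pi / N) = sin^2 (N x) / 4^(N-1), so the integrand is
  sin^(2p) (n' x) / 4^(n-p), whose integral is a Wallis integral.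
\<close>

lemma bij_betw_mult_mod:
  fixes a N :: nat
  assumes "coprime a N"
  shows "bij_betw (\<lambda>i. a * i mod N) {..<N} {..<N}"
proof (cases "N = 0")
  case False
  have "inj_on (\<lambda>i. a * i mod N) {..<N}"
  proof (rule inj_onI)
    fix i j assume "i \<in> {..<N}" "j \<in> {..<N}" "a * i mod N = a * j mod N"
    then have "[i = j] (mod N)" "i < N" "j < N"
      using cong_mult_lcancel_nat[OF assms] by (auto simp: cong_def)
    then show "i = j" by (rule cong_less_modulus_unique_nat)
  qed
  moreover have "(\<lambda>i. a * i mod N) ` {..<N} = {..<N}"
    by (rule endo_inj_surj) (use calculation False in auto)
  ultimately show ?thesis by (simp add: bij_betw_def)
qed (simp_all add: bij_betw_def)

lemma prod_mult_mod_eq_power: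
  fixes a N p :: nat and h :: "nat \<Rightarrow> 'b::comm_monoid_mult"
  assumes "coprime a N"
  shows "(\<Prod>i<p * N. h (a * i mod N)) = (\<Prod>r<N. h r) ^ p"
proof (induction p)
  case (Suc p)
  have "(\<Prod>i\<in>{p*N..<p*N+N}. h (a * i mod N)) = (\<Prod>i<N. h (a * (i + p*N) mod N))"
    using prod.shift_bounds_nat_ivl[of "\<lambda>i. h (a * i mod N)" 0 "p*N" N]
    by (simp add: add.commute atLeast0LessThan)
  also have "\<dots> = (\<Prod>i<N. h (a * i mod N))"
    by (simp add: distrib_left mult.assoc[symmetric])
  also have "\<dots> = (\<Prod>r<N. h r)"
    by (rule prod.reindex_bij_betw[OF bij_betw_mult_mod[OF assms]])
  finally have "(\<Prod>i\<in>{p*N..<Suc p*N}. h (a * i mod N)) = (\<Prod>r<N. h r)"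
    by (simp add: add.commute)
  moreover have "(\<Prod>i<Suc p*N. h (a * i mod N))
      = (\<Prod>i<p*N. h (a * i mod N)) * (\<Prod>i\<in>{p*N..<Suc p*N}. h (a * i mod N))"
    by (simp add: prod.atLeastLessThan_concat[symmetric] atLeast0LessThan[symmetric])
  ultimately show ?case using Suc by (simp add: mult.commute)
qed simp

lemma roots_of_unity_prod:
  fixes z :: complex
  assumes "N > 0"
  shows "z ^ N - 1 = (\<Prod>j<N. z - cis (2 * pi * real j / real N))"
proof -
  define P :: "complex poly" where "P = monom 1 N - 1"
  have poly_P: "poly P w = w ^ N - 1" for w by (simp add: P_def poly_monom)
  have "lead_coeff (-1 + monom (1::complex) N) = 1"
    using lead_coeff_add_le[of "-1 :: complex poly" "monom 1 N"] assms
    by (simp add: degree_monom_eq)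
  then have lead_P: "lead_coeff P = 1" by (simp add: P_def)
  have "rsquarefree P"
    unfolding rsquarefree_roots
  proof (intro allI notI)
    fix a assume a: "poly P a = 0 \<and> poly (pderiv P) a = 0"
    have "poly (pderiv P) a = of_nat N * a ^ (N - 1)"
      by (simp add: P_def pderiv_diff pderiv_monom poly_monom)
    with a assms have "a = 0" by simp
    with a poly_P assms show False by (simp add: zero_power)
  qed
  from complex_poly_decompose_rsquarefree[OF this] lead_P
  have "P = (\<Prod>w | w ^ N = 1. [:-w, 1:])" by (simp add: poly_P)
  then have "poly P z = (\<Prod>w | w ^ N = 1. z - w)"
    by (simp add: poly_prod)
  then have "z ^ N - 1 = (\<Prod>w | w ^ N = 1. z - w)"
    by (simp add: poly_P)
  also have "\<dots> = (\<Prod>j<N. z - cis (2 * pi * real j / real N))"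
    by (rule prod.reindex_bij_betw[OF Complex.bij_betw_roots_unity[OF assms], symmetric])
  finally show ?thesis .
qed

lemma norm_cis_diff_squared: "cmod (cis t - cis s) ^ 2 = 4 * sin ((t - s) / 2) ^ 2"
proof -
  have "cmod (cis t - cis s) ^ 2 = (cos t - cos s)^2 + (sin t - sin s)^2"
    by (simp add: cmod_power2)
  also have "\<dots> = 2 - 2 * cos (t - s)"
    by (simp add: power2_eq_square cos_diff algebra_simps)
  also have "cos (t - s) = cos (2 * ((t - s) / 2))"
    by (rule arg_cong[where f = cos]) simp
  also have "\<dots> = 1 - 2 * sin ((t - s) / 2) ^ 2"
    by (rule cos_double_sin)
  finally show ?thesis by simp
qed

lemma prod_sin_squared_shifts:
  assumes "N > 0"
  shows "(\<Prod>j<N. sin (x + real j * pi / real N) ^ 2) = sin (real N * x) ^ 2 / 4 ^ (N - 1)"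
proof -
  have "cis (- 2 * x) ^ N = cis (- 2 * real N * x)"
    by (simp add: Complex.DeMoivre mult_ac)
  then have "cis (- 2 * real N * x) - cis 0 = (\<Prod>j<N. cis (- 2 * x) - cis (2 * pi * real j / real N))"
    using roots_of_unity_prod[OF assms, of "cis (- 2 * x)"] by simp
  then have "cmod (cis (- 2 * real N * x) - cis 0) ^ 2
      = (\<Prod>j<N. cmod (cis (- 2 * x) - cis (2 * pi * real j / real N)) ^ 2)"
    by (simp only: prod_norm[symmetric] prod_power_distrib)
  then have "4 * sin ((- 2 * real N * x - 0) / 2) ^ 2
      = (\<Prod>j<N. 4 * sin ((- 2 * x - 2 * pi * real j / real N) / 2) ^ 2)"
    by (simp only: norm_cis_diff_squared)
  also have "\<dots> = (\<Prod>j<N. 4 * sin (x + real j * pi / real N) ^ 2)"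
  proof (rule prod.cong)
    fix j
    have arg: "(- 2 * x - 2 * pi * real j / real N) / 2 = - (x + real j * pi / real N)"
      by (simp add: field_simps)
    show "4 * sin ((- 2 * x - 2 * pi * real j / real N) / 2) ^ 2
        = 4 * sin (x + real j * pi / real N) ^ 2"
      by (simp only: arg sin_minus power2_minus)
  qed simp
  also have "\<dots> = 4 * 4 ^ (N - 1) * (\<Prod>j<N. sin (x + real j * pi / real N) ^ 2)"
    using assms by (simp add: prod.distrib power_Suc[symmetric])
  finally show ?thesis by (simp add: field_simps)
qed

lemma has_real_derivative_sin_power_cos:
  "((\<lambda>x. sin (a * x) ^ (k + 1) * cos (a * x)) has_real_derivative
     a * ((real k + 1) * sin (a * x) ^ k - (real k + 2) * sin (a * x) ^ (k + 2))) (at x)"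
proof -
  have dsin: "((\<lambda>x. sin (a * x)) has_real_derivative cos (a * x) * a) (at x)"
    by (auto intro!: derivative_eq_intros)
  have dsin_power: "((\<lambda>x. sin (a * x) ^ (k + 1)) has_real_derivative
      real (k + 1) * (cos (a * x) * a * sin (a * x) ^ k)) (at x)"
    using DERIV_power[OF dsin, of "k + 1"] by simp
  have dcos: "((\<lambda>x. cos (a * x)) has_real_derivative - sin (a * x) * a) (at x)"
    by (auto intro!: derivative_eq_intros)
  have deriv: "((\<lambda>x. sin (a * x) ^ (k + 1) * cos (a * x)) has_real_derivative
      real (k + 1) * (cos (a * x) * a * sin (a * x) ^ k) * cos (a * x)
        + - sin (a * x) * a * sin (a * x) ^ (k + 1)) (at x)"
    by (rule DERIV_mult[OF dsin_power dcos])
  have "real (k + 1) * (cos (a * x) * a * sin (a * x) ^ k) * cos (a * x)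
        + - sin (a * x) * a * sin (a * x) ^ (k + 1)
      = a * ((real k + 1) * sin (a * x) ^ k * cos (a * x) ^ 2 - sin (a * x) ^ (k + 2))"
    by (simp add: algebra_simps power2_eq_square)
  also have "\<dots> = a * ((real k + 1) * sin (a * x) ^ k - (real k + 2) * sin (a * x) ^ (k + 2))"
    unfolding cos_squared_eq by (simp add: algebra_simps power_add power2_eq_square)
  finally show ?thesis
    using deriv by (simp only:)
qed

lemma integral_sin_power_recurrence:
  fixes N k :: nat
  assumes "N > 0"
  shows "integral {-pi/2..pi/2} (\<lambda>x. sin (real N * x) ^ (k + 2))
    = (real k + 1) / (real k + 2) * integral {-pi/2..pi/2} (\<lambda>x. sin (real N * x) ^ k)"
proof -
  define F where "F x = sin (real N * x) ^ (k + 1) * cos (real N * x)" for x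
  define F' where "F' x = real N * ((real k + 1) * sin (real N * x) ^ k
      - (real k + 2) * sin (real N * x) ^ (k + 2))" for x
  define I where "I j = integral {-pi/2..pi/2} (\<lambda>x. sin (real N * x) ^ j)" for j
  \<comment> \<open>\<open>F\<close> vanishes at \<open>\<plusminus>pi/2\<close> because \<open>sin t * cos t = sin (2 * t) / 2\<close> and \<open>sin (N * pi) = 0\<close>.\<close>
  have "sin (real N * (pi / 2)) * cos (real N * (pi / 2)) = 0"
    using sin_double[of "real N * (pi / 2)"] by simp
  then have F_ends: "F (pi / 2) = 0" "F (- pi / 2) = 0"
    by (auto simp: F_def)
  have "(F' has_integral F (pi / 2) - F (- pi / 2)) {-pi/2..pi/2}"
    using has_real_derivative_sin_power_cos[of "real N" k]
    unfolding F_def F'_def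
    by (intro fundamental_theorem_of_calculus)
      (auto simp: has_real_derivative_iff_has_vector_derivative[symmetric]
        intro: has_field_derivative_at_within)
  with F_ends have "(F' has_integral 0) {-pi/2..pi/2}"
    by simp
  moreover have "(F'
      has_integral real N * ((real k + 1) * I k - (real k + 2) * I (k + 2))) {-pi/2..pi/2}"
    unfolding I_def F'_def
    by (intro has_integral_mult_right has_integral_diff integrable_integral
        integrable_continuous_interval continuous_intros)
  ultimately have "real N * ((real k + 1) * I k - (real k + 2) * I (k + 2)) = 0"
    using has_integral_unique by blast
  with assms have "(real k + 2) * I (k + 2) = (real k + 1) * I k"
    by simp
  then show ?thesis
    unfolding I_def by (simp add: field_simps)
qed

lemma odd_double_fact_Suc: "odd_double_fact (Suc p) = (2 * p + 1) * odd_double_fact p"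
  by (simp add: odd_double_fact_def prod.nat_ivl_Suc')

lemma integral_sin_power_even:
  fixes N p :: nat
  assumes "N > 0"
  shows "integral {-pi/2..pi/2} (\<lambda>x. sin (real N * x) ^ (2 * p))
    = pi * odd_double_fact p / (2 ^ p * fact p)"
proof (induction p)
  case (Suc p)
  have "integral {-pi/2..pi/2} (\<lambda>x. sin (real N * x) ^ (2 * Suc p))
      = (2 * real p + 1) / (2 * real p + 2) * integral {-pi/2..pi/2} (\<lambda>x. sin (real N * x) ^ (2 * p))"
    using integral_sin_power_recurrence[OF assms, of "2 * p"] by simp
  also have "\<dots> = pi * odd_double_fact (Suc p) / (2 ^ Suc p * fact (Suc p))"
    unfolding Suc by (simp add: odd_double_fact_Suc field_simps)
  finally show ?case .
qed (simp add: odd_double_fact_def)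

lemma sin_squared_add_nat_mult_pi: "sin (y + real q * pi) ^ 2 = sin y ^ 2"
  by (cases "even q") (auto simp: sin_add power_mult_distrib)

lemma prod_g_equally_spaced:
  fixes m n :: nat
  assumes "m > 0" "n > 0"
  defines "p \<equiv> gcd m n"
  shows "(\<Prod>i<n. g (x + real m * real i * (pi / real n)))
    = sin (real (n div p) * x) ^ (2 * p) / 4 ^ (n - p)"
proof -
  define n' where "n' = n div p"
  define m' where "m' = m div p"
  have n_eq: "n = p * n'" and m_eq: "m = p * m'"
    by (simp_all add: n'_def m'_def p_def)
  have "p > 0"
    using assms by (simp add: p_def)
  have "n' > 0"
    using \<open>n > 0\<close> unfolding n_eq by simp
  have "coprime m' n'"
    unfolding m'_def n'_def p_def using assms by (intro div_gcd_coprime) auto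
  have g_shift: "g (x + real m * real i * (pi / real n))
      = sin (x + real (m' * i mod n') * pi / real n') ^ 2" for i
  proof -
    have "real (m' * i) = real (m' * i div n') * real n' + real (m' * i mod n')"
      by (metis div_mult_mod_eq of_nat_add of_nat_mult)
    then have "x + real m * real i * (pi / real n)
        = (x + real (m' * i mod n') * pi / real n') + real (m' * i div n') * pi"
      using \<open>p > 0\<close> \<open>n' > 0\<close> by (simp add: m_eq n_eq field_simps)
    then show ?thesis
      unfolding g_def by (simp only: sin_squared_add_nat_mult_pi)
  qed
  have "(\<Prod>i<n. g (x + real m * real i * (pi / real n)))
      = (\<Prod>i<p * n'. (\<lambda>r. sin (x + real r * pi / real n') ^ 2) (m' * i mod n'))"
    unfolding g_shift by (simp add: n_eq)
  also have "\<dots> = (\<Prod>r<n'. sin (x + real r * pi / real n') ^ 2) ^ p"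
    by (rule prod_mult_mod_eq_power[OF \<open>coprime m' n'\<close>])
  also have "\<dots> = (sin (real n' * x) ^ 2 / 4 ^ (n' - 1)) ^ p"
    by (simp only: prod_sin_squared_shifts[OF \<open>n' > 0\<close>])
  also have "\<dots> = sin (real n' * x) ^ (2 * p) / 4 ^ ((n' - 1) * p)"
    by (simp only: power_divide power_mult)
  also have "(n' - 1) * p = n - p"
    by (simp add: n_eq algebra_simps)
  finally show ?thesis
    by (simp add: n'_def)
qed

theorem lemma5p1:
  fixes m n :: nat
  assumes "m > 0" and "n > 0"
  shows "Gtilde m n =
    (2 ^ gcd m n * real (odd_double_fact (gcd m n))) / (4 ^ n * fact (gcd m n))"
proof -
  define p where "p = gcd m n"
  have "p \<le> n" "p > 0"
    using assms by (simp_all add: p_def)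
  then have "n div p > 0"
    by (simp add: div_greater_zero_iff)
  have "Gtilde m n = 1 / pi * integral {-pi/2..pi/2} (\<lambda>x. sin (real (n div p) * x) ^ (2 * p) / 4 ^ (n - p))"
    unfolding Gtilde_def p_def by (simp only: prod_g_equally_spaced[OF assms])
  also have "\<dots> = odd_double_fact p / (2 ^ p * fact p * 4 ^ (n - p))"
    unfolding integral_divide integral_sin_power_even[OF \<open>n div p > 0\<close>] by simp
  also have "(4::real) ^ (n - p) = 4 ^ n / (2 ^ p * 2 ^ p)"
    using \<open>p \<le> n\<close> by (simp add: power_diff power_mult_distrib[symmetric])
  finally show ?thesis
    by (simp add: p_def field_simps)
qed

end
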